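(* Consider a Markov decision process with continuous state space $\mathcal{S}$, continuous action space $\mathcal{A}$, transition density $p(\mathbf{s}'|\mathbf{s},\mathbf{a})$ and discount factor $\gamma\in(0,1)$, and let $r_1, r_2$ be bounded reward functions. Let $Q_1^*$ and $Q_2^*$ be the optimal soft Q-functions (temperature $1$) for the rewards $r_1$ and $r_2$, with optimal soft policies $\pi_i^*(\mathbf{a}|\mathbf{s}) \propto \exp(Q_i^*(\mathbf{s},\mathbf{a}))$, $i=1,2$. Define $Q_\Sigma \triangleq \frac{1}{2}(Q_1^*+Q_2^* )$ and $r_\mathcal{C}\triangleq \frac{1}{2}(r_1+r_2)$, and let $Q_\mathcal{C}^*$ be the optimal soft Q-function for the reward $r_\mathcal{C}$. Then for all $\mathbf{s}\in\mathcal{S}$ and all $\mathbf{a}\in\mathcal{A}$, $$Q_\Sigma(\mathbf{s},\mathbf{a}) \ge Q_\mathcal{C}^*(\mathbf{s},\mathbf{a}) \ge Q_\Sigma(\mathbf{s},\mathbf{a}) - C^*(\mathbf{s},\mathbf{a}),$$ where $C^*$ is the fixed point of the iteration $$C(\mathbf{s},\mathbf{a}) \leftarrow \gamma\, \mathbb{E}_{\mathbf{s}'\sim p(\mathbf{s}'|\mathbf{s},\mathbf{a})}\Big[ D_{1/2}\big(\pi_1^*(\cdot|\mathbf{s}')\,\|\,\pi_2^*(\cdot|\mathbf{s}')\big) + \max_{\mathbf{a}'\in\mathcal{A}} C(\mathbf{s}',\mathbf{a}')\Big],$$ and $D_{1/2}$ denotes the Rényi divergence of order $1/2$.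
   Context: Soft (maximum-entropy) reinforcement learning with temperature $1$: for a bounded reward $r$, the soft Bellman backup maps a bounded function $Q$ on $\mathcal{S}\times\mathcal{A}$ to $r(\mathbf{s},\mathbf{a}) + \gamma\,\mathbb{E}_{\mathbf{s}'\sim p(\mathbf{s}'|\mathbf{s},\mathbf{a})}[V(\mathbf{s}')]$, where $V(\mathbf{s}) = \log\int_{\mathcal{A}} \exp(Q(\mathbf{s},\mathbf{a}))\,d\mathbf{a}$. This backup is a contraction, and the optimal soft Q-function $Q^*$ for reward $r$ is its unique fixed point; the corresponding optimal soft policy is $\pi^*(\mathbf{a}|\mathbf{s}) = \exp(Q^*(\mathbf{s},\mathbf{a}) - V^*(\mathbf{s}))$. The Rényi divergence of order $1/2$ between densities $p,q$ is $D_{1/2}(p\|q) = -2\log\int \sqrt{p(\mathbf{a})q(\mathbf{a})}\,d\mathbf{a}$. *)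

theory Defs
  imports "HOL-Probability.Probability"
begin

definition soft_V :: "'a measure \<Rightarrow> ('s \<Rightarrow> 'a \<Rightarrow> real) \<Rightarrow> 's \<Rightarrow> real" where
  "soft_V A Q s = ln (\<integral>a. exp (Q s a) \<partial>A)"

definition soft_backup ::
  "'a measure \<Rightarrow> ('s \<Rightarrow> 'a \<Rightarrow> 's measure) \<Rightarrow> real \<Rightarrow> ('s \<Rightarrow> 'a \<Rightarrow> real)
     \<Rightarrow> ('s \<Rightarrow> 'a \<Rightarrow> real) \<Rightarrow> 's \<Rightarrow> 'a \<Rightarrow> real" where
  "soft_backup A P \<gamma> r Q s a = r s a + \<gamma> * (\<integral>s'. soft_V A Q s' \<partial>(P s a))"

definition soft_policy :: "'a measure \<Rightarrow> ('s \<Rightarrow> 'a \<Rightarrow> real) \<Rightarrow> 's \<Rightarrow> 'a \<Rightarrow> real" where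
  "soft_policy A Q s a = exp (Q s a - soft_V A Q s)"

definition renyi_half :: "'a measure \<Rightarrow> ('a \<Rightarrow> real) \<Rightarrow> ('a \<Rightarrow> real) \<Rightarrow> real" where
  "renyi_half A p q = - 2 * ln (\<integral>a. sqrt (p a * q a) \<partial>A)"

text \<open>Q is an optimal soft Q-function for reward r: a bounded measurable function
  that is a fixed point of the soft Bellman backup (the backup is a contraction on
  bounded functions, so this fixed point is unique).\<close>
definition is_opt_soft_Q ::
  "'s measure \<Rightarrow> 'a measure \<Rightarrow> ('s \<Rightarrow> 'a \<Rightarrow> 's measure) \<Rightarrow> real \<Rightarrow> ('s \<Rightarrow> 'a \<Rightarrow> real)
     \<Rightarrow> ('s \<Rightarrow> 'a \<Rightarrow> real) \<Rightarrow> bool" where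
  "is_opt_soft_Q S A P \<gamma> r Q \<longleftrightarrow>
     bounded (range (case_prod Q)) \<and>
     case_prod Q \<in> borel_measurable (S \<Otimes>\<^sub>M A) \<and>
     (\<forall>s a. Q s a = soft_backup A P \<gamma> r Q s a)"

definition is_div_fixpoint ::
  "'s measure \<Rightarrow> 'a measure \<Rightarrow> ('s \<Rightarrow> 'a \<Rightarrow> 's measure) \<Rightarrow> real \<Rightarrow> ('s \<Rightarrow> 'a \<Rightarrow> real)
     \<Rightarrow> ('s \<Rightarrow> 'a \<Rightarrow> real) \<Rightarrow> ('s \<Rightarrow> 'a \<Rightarrow> real) \<Rightarrow> bool" where
  "is_div_fixpoint S A P \<gamma> Q1 Q2 C \<longleftrightarrow>
     bounded (range (case_prod C)) \<and>
     (\<lambda>s'. renyi_half A (soft_policy A Q1 s') (soft_policy A Q2 s') + (SUP a'. C s' a'))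
        \<in> borel_measurable S \<and>
     (\<forall>s a. C s a = \<gamma> * (\<integral>s'. renyi_half A (soft_policy A Q1 s') (soft_policy A Q2 s')
                                 + (SUP a'. C s' a') \<partial>(P s a)))"

end

theory Submission
  imports Defs
begin

(* The soft value V Q s = ln (\<integral> exp (Q s a) da) is monotone and commutes with adding
   constants, so a bound QC - Q\<^sub>\<Sigma> \<le> K holding everywhere propagates through the soft
   Bellman equations to QC - Q\<^sub>\<Sigma> \<le> \<gamma> K; hence sup (QC - Q\<^sub>\<Sigma>) \<le> 0. Comparing the
   backup of Q\<^sub>\<Sigma> with the mean of those of Q1, Q2 uses Hoelder's inequality
   V Q\<^sub>\<Sigma> \<le> (V Q1 + V Q2) / 2. Its gap is exactly half the Renyi divergence of order 1/2
   of the two optimal policies, and the same contraction argument applied to Q\<^sub>\<Sigma> - QC - C,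
   where C absorbs that gap, gives the lower bound. *)

lemma bounded_range_case_prod_abs_le:
  fixes Q :: "'s \<Rightarrow> 'a \<Rightarrow> real"
  assumes "bounded (range (case_prod Q))"
  obtains M where "\<And>s a. \<bar>Q s a\<bar> \<le> M"
  using assms unfolding bounded_real by fastforce

lemma nonpos_if_upper_bound_contracts:
  fixes f :: "'b \<Rightarrow> real"
  assumes "bdd_above (range f)" and "\<gamma> < 1"
    and contract: "\<And>K x. (\<And>y. f y \<le> K) \<Longrightarrow> f x \<le> \<gamma> * K"
  shows "f x \<le> 0"
proof -
  define K where "K = (SUP y. f y)"
  have le_K: "f y \<le> K" for y
    unfolding K_def using assms(1) by (rule cSUP_upper[OF UNIV_I])
  have "K \<le> \<gamma> * K"
    unfolding K_def by (rule cSUP_least) (auto intro: contract le_K[unfolded K_def])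
  with \<open>\<gamma> < 1\<close> have "K \<le> 0"
    by (smt (verit) mult_le_cancel_right1)
  with le_K show ?thesis by (rule order_trans)
qed

lemma exp_midpoint_le:
  fixes x y t :: real
  assumes "t > 0"
  shows "exp ((x + y) / 2) \<le> (t * exp x + exp y / t) / 2"
proof -
  define u v where "u = exp (x / 2)" and "v = exp (y / 2)"
  have "exp ((x + y) / 2) = u * v" "exp x = u\<^sup>2" "exp y = v\<^sup>2"
    unfolding u_def v_def by (simp_all add: exp_add[symmetric] add_divide_distrib exp_double[symmetric])
  moreover have "2 * t * (u * v) \<le> t * t * u\<^sup>2 + v\<^sup>2"
    using sum_squares_ge_zero[of "t * u - v" 0] by (simp add: power2_eq_square algebra_simps)
  ultimately show ?thesis
    using assms by (simp add: field_simps)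
qed

lemma sqrt_exp_mult: "sqrt (exp u * exp v) = exp ((u + v) / 2)"
  by (simp add: exp_add[symmetric] real_sqrt_unique exp_double[symmetric] power2_eq_square)

lemma abs_SUP_le:
  fixes f :: "'b \<Rightarrow> real"
  assumes "\<And>x. \<bar>f x\<bar> \<le> B"
  shows "\<bar>SUP x. f x\<bar> \<le> B"
proof -
  have "bdd_above (range f)"
    using assms by (intro bdd_aboveI2[where M=B]) (simp add: abs_le_iff)
  then have "f x \<le> (SUP x. f x)" for x
    by (rule cSUP_upper[OF UNIV_I])
  moreover have "(SUP x. f x) \<le> B"
    using assms by (intro cSUP_least) (auto simp: abs_le_iff)
  moreover have "- B \<le> f x" for x
    using assms[of x] by (simp add: abs_le_iff)
  ultimately show ?thesis
    by (meson abs_le_iff minus_le_iff order_trans)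
qed

locale soft_action_space = finite_measure A for A :: "'a measure" +
  assumes emeasure_space_pos: "emeasure A (space A) > 0"
begin

lemma integral_exp_pos:
  fixes f :: "'a \<Rightarrow> real"
  assumes "integrable A (\<lambda>a. exp (f a))"
  shows "0 < (\<integral>a. exp (f a) \<partial>A)"
  using integral_less_AE_space[of "\<lambda>_. 0" "\<lambda>a. exp (f a)"] assms emeasure_space_pos by simp

lemma integrable_exp_bounded:
  fixes f :: "'a \<Rightarrow> real"
  assumes "f \<in> borel_measurable A" and "\<And>a. \<bar>f a\<bar> \<le> M"
  shows "integrable A (\<lambda>a. exp (f a))"
  using assms by (intro integrable_const_bound[where B="exp M"]) (auto simp: abs_le_iff)

lemma soft_V_le_add:
  assumes "integrable A (\<lambda>a. exp (Q s a))" and "integrable A (\<lambda>a. exp (Q' s a))"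
    and "\<And>a. Q s a \<le> Q' s a + c"
  shows "soft_V A Q s \<le> soft_V A Q' s + c"
proof -
  have "(\<integral>a. exp (Q s a) \<partial>A) \<le> (\<integral>a. exp (Q' s a) * exp c \<partial>A)"
  proof (rule integral_mono)
    show "integrable A (\<lambda>a. exp (Q' s a) * exp c)"
      using assms(2) by (rule integrable_mult_left)
    show "exp (Q s a) \<le> exp (Q' s a) * exp c" for a
      using assms(3)[of a] by (simp add: mult_exp_exp)
  qed (fact assms(1))
  also have "\<dots> = (\<integral>a. exp (Q' s a) \<partial>A) * exp c"
    by simp
  finally have "ln (\<integral>a. exp (Q s a) \<partial>A) \<le> ln ((\<integral>a. exp (Q' s a) \<partial>A) * exp c)"
    using integral_exp_pos[OF assms(1)] by (rule ln_mono)
  then show ?thesis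
    unfolding soft_V_def using integral_exp_pos[OF assms(2)] by (simp add: ln_mult)
qed

lemma soft_V_const: "soft_V A (\<lambda>s a. c) s = c + ln (measure A (space A))"
  using emeasure_space_pos by (simp add: soft_V_def ln_mult emeasure_eq_measure)

lemma abs_soft_V_le:
  assumes "integrable A (\<lambda>a. exp (Q s a))" and "\<And>a. \<bar>Q s a\<bar> \<le> M"
  shows "\<bar>soft_V A Q s\<bar> \<le> M + \<bar>ln (measure A (space A))\<bar>"
proof -
  have bound: "Q s a \<le> 0 + M" "0 \<le> Q s a + M" for a
    using assms(2)[of a] by linarith+
  have const: "integrable A (\<lambda>a. exp 0 :: real)"
    by simp
  have "soft_V A Q s \<le> soft_V A (\<lambda>s a. 0) s + M"
    by (intro soft_V_le_add) (simp_all only: assms(1) bound const)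
  moreover have "soft_V A (\<lambda>s a. 0) s \<le> soft_V A Q s + M"
    by (intro soft_V_le_add) (simp_all only: assms(1) bound const)
  ultimately show ?thesis
    by (simp add: soft_V_const)
qed

(* Cauchy-Schwarz for exp (Q/2) and exp (Q'/2), via AM-GM with the optimal weight t. *)
lemma soft_V_midpoint_le:
  fixes Q Q' :: "'s \<Rightarrow> 'a \<Rightarrow> real"
  defines "Qm \<equiv> \<lambda>s a. (Q s a + Q' s a) / 2"
  assumes int1: "integrable A (\<lambda>a. exp (Q s a))" and int2: "integrable A (\<lambda>a. exp (Q' s a))"
    and int: "integrable A (\<lambda>a. exp (Qm s a))"
  shows "soft_V A Qm s \<le> (soft_V A Q s + soft_V A Q' s) / 2"
proof -
  define I I' where "I = (\<integral>a. exp (Q s a) \<partial>A)" and "I' = (\<integral>a. exp (Q' s a) \<partial>A)"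
  have "I > 0" "I' > 0"
    unfolding I_def I'_def using int1 int2 by (auto intro: integral_exp_pos)
  define t where "t = sqrt I' / sqrt I"
  have "t > 0"
    using \<open>I > 0\<close> \<open>I' > 0\<close> by (simp add: t_def)
  have "(\<integral>a. exp (Qm s a) \<partial>A) \<le> (\<integral>a. (t * exp (Q s a) + exp (Q' s a) / t) / 2 \<partial>A)"
    unfolding Qm_def using int int1 int2 exp_midpoint_le[OF \<open>t > 0\<close>]
    by (intro integral_mono) (auto simp: Qm_def)
  also have "\<dots> = (t * I + I' / t) / 2"
    using int1 int2 by (simp add: I_def I'_def)
  also have "\<dots> = sqrt I * sqrt I'"
    using \<open>I > 0\<close> \<open>I' > 0\<close> by (simp add: t_def field_simps)
  finally have "ln (\<integral>a. exp (Qm s a) \<partial>A) \<le> ln (sqrt I * sqrt I')"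
    using integral_exp_pos[OF int] by simp
  also have "\<dots> = (ln I + ln I') / 2"
    using \<open>I > 0\<close> \<open>I' > 0\<close> by (simp add: ln_mult ln_sqrt)
  finally show ?thesis
    unfolding soft_V_def I_def I'_def .
qed

lemma renyi_half_soft_policy:
  fixes Q Q' :: "'s \<Rightarrow> 'a \<Rightarrow> real"
  defines "Qm \<equiv> \<lambda>s a. (Q s a + Q' s a) / 2"
  assumes "integrable A (\<lambda>a. exp (Qm s a))"
  shows "renyi_half A (soft_policy A Q s) (soft_policy A Q' s)
           = soft_V A Q s + soft_V A Q' s - 2 * soft_V A Qm s"
proof -
  define m where "m = (soft_V A Q s + soft_V A Q' s) / 2"
  have "sqrt (soft_policy A Q s a * soft_policy A Q' s a) = exp (Qm s a) * exp (- m)" for a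
  proof -
    have "((Q s a - soft_V A Q s) + (Q' s a - soft_V A Q' s)) / 2 = Qm s a + - m"
      by (simp add: Qm_def m_def diff_divide_distrib add_divide_distrib)
    then show ?thesis
      unfolding soft_policy_def sqrt_exp_mult by (simp only: exp_add)
  qed
  then have "renyi_half A (soft_policy A Q s) (soft_policy A Q' s)
               = - 2 * ln ((\<integral>a. exp (Qm s a) \<partial>A) * exp (- m))"
    by (simp add: renyi_half_def)
  also have "\<dots> = 2 * m - 2 * soft_V A Qm s"
    using integral_exp_pos[OF assms(2)] by (simp add: ln_mult soft_V_def)
  finally show ?thesis
    by (simp add: m_def)
qed

end

definition bounded_borel_Q :: "'s measure \<Rightarrow> 'a measure \<Rightarrow> ('s \<Rightarrow> 'a \<Rightarrow> real) \<Rightarrow> bool" where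
  "bounded_borel_Q S A Q \<longleftrightarrow>
     bounded (range (case_prod Q)) \<and> case_prod Q \<in> borel_measurable (S \<Otimes>\<^sub>M A)"

lemma is_opt_soft_Q_bounded_borel: "is_opt_soft_Q S A P \<gamma> r Q \<Longrightarrow> bounded_borel_Q S A Q"
  by (simp add: is_opt_soft_Q_def bounded_borel_Q_def)

lemma bounded_borel_Q_midpoint:
  fixes Q1 Q2 :: "'s \<Rightarrow> 'a \<Rightarrow> real"
  assumes "bounded_borel_Q S A Q1" and "bounded_borel_Q S A Q2"
  shows "bounded_borel_Q S A (\<lambda>s a. (Q1 s a + Q2 s a) / 2)"
proof -
  obtain M1 M2 where M: "\<And>s a. \<bar>Q1 s a\<bar> \<le> M1" "\<And>s a. \<bar>Q2 s a\<bar> \<le> M2"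
    using assms unfolding bounded_borel_Q_def by (metis bounded_range_case_prod_abs_le)
  have "\<bar>(Q1 s a + Q2 s a) / 2\<bar> \<le> (M1 + M2) / 2" for s a
    using abs_triangle_ineq[of "Q1 s a" "Q2 s a"] M(1)[of s a] M(2)[of s a] by simp
  then have "bounded (range (case_prod (\<lambda>s a. (Q1 s a + Q2 s a) / 2)))"
    unfolding bounded_real by (intro exI[of _ "(M1 + M2) / 2"]) auto
  have "case_prod (\<lambda>s a. (Q1 s a + Q2 s a) / 2) = (\<lambda>p. (case_prod Q1 p + case_prod Q2 p) / 2)"
    by (simp add: case_prod_beta')
  moreover have "case_prod Q1 \<in> borel_measurable (S \<Otimes>\<^sub>M A)" "case_prod Q2 \<in> borel_measurable (S \<Otimes>\<^sub>M A)"
    using assms by (simp_all add: bounded_borel_Q_def)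
  ultimately have "case_prod (\<lambda>s a. (Q1 s a + Q2 s a) / 2) \<in> borel_measurable (S \<Otimes>\<^sub>M A)"
    by (simp only:) (intro borel_measurable_divide borel_measurable_add borel_measurable_const)
  with \<open>bounded _\<close> show ?thesis
    by (simp add: bounded_borel_Q_def)
qed

locale soft_mdp = soft_action_space A
  for S :: "'s measure" and A :: "'a measure" and P :: "'s \<Rightarrow> 'a \<Rightarrow> 's measure" and \<gamma> :: real +
  assumes space_S: "space S = UNIV"
    and prob_space_P: "\<And>s a. prob_space (P s a)"
    and sets_P: "\<And>s a. sets (P s a) = sets S"
    and discount_nonneg: "0 \<le> \<gamma>" and discount_less_one: "\<gamma> < 1"
begin

lemma integrable_P_bounded:
  fixes f :: "'s \<Rightarrow> real"
  assumes "f \<in> borel_measurable S" and "\<And>s'. \<bar>f s'\<bar> \<le> B"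
  shows "integrable (P s a) f"
proof -
  interpret prob_space "P s a" by (rule prob_space_P)
  have "f \<in> borel_measurable (P s a)"
    using assms(1) measurable_cong_sets[OF sets_P[of s a] refl] by blast
  then show ?thesis
    using assms(2) by (intro integrable_const_bound[where B=B]) auto
qed

lemma
  assumes "bounded_borel_Q S A Q"
  shows integrable_exp_soft_Q: "integrable A (\<lambda>a. exp (Q s a))"
    and borel_measurable_soft_V: "soft_V A Q \<in> borel_measurable S"
    and integrable_soft_V: "integrable (P s a) (soft_V A Q)"
proof -
  obtain M where M: "\<And>s a. \<bar>Q s a\<bar> \<le> M"
    using assms unfolding bounded_borel_Q_def by (metis bounded_range_case_prod_abs_le)
  have meas: "case_prod Q \<in> borel_measurable (S \<Otimes>\<^sub>M A)"
    using assms by (simp add: bounded_borel_Q_def)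
  have int: "integrable A (\<lambda>a. exp (Q s a))" for s
    using measurable_Pair2[OF meas] space_S M by (intro integrable_exp_bounded) auto
  then show "integrable A (\<lambda>a. exp (Q s a))" .
  show "soft_V A Q \<in> borel_measurable S"
    unfolding soft_V_def[abs_def] using meas by measurable
  then show "integrable (P s a) (soft_V A Q)"
    using abs_soft_V_le[OF int M] by (rule integrable_P_bounded)
qed

lemma bounded_soft_V:
  assumes "bounded_borel_Q S A Q"
  obtains B where "\<And>s. \<bar>soft_V A Q s\<bar> \<le> B"
proof -
  obtain M where "\<And>s a. \<bar>Q s a\<bar> \<le> M"
    using assms unfolding bounded_borel_Q_def by (metis bounded_range_case_prod_abs_le)
  then have "\<bar>soft_V A Q s\<bar> \<le> M + \<bar>ln (measure A (space A))\<bar>" for s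
    by (rule abs_soft_V_le[where Q=Q, OF integrable_exp_soft_Q[OF assms]])
  then show ?thesis
    by (rule that)
qed

lemma
  assumes Q1: "bounded_borel_Q S A Q1" and Q2: "bounded_borel_Q S A Q2"
  shows soft_V_midpoint_le_mean:
      "soft_V A (\<lambda>s a. (Q1 s a + Q2 s a) / 2) s \<le> (soft_V A Q1 s + soft_V A Q2 s) / 2"
    and renyi_half_soft_policy_eq:
      "renyi_half A (soft_policy A Q1 s) (soft_policy A Q2 s)
         = soft_V A Q1 s + soft_V A Q2 s - 2 * soft_V A (\<lambda>s a. (Q1 s a + Q2 s a) / 2) s"
proof -
  have int: "integrable A (\<lambda>a. exp ((Q1 s a + Q2 s a) / 2))"
    using integrable_exp_soft_Q[OF bounded_borel_Q_midpoint[OF Q1 Q2]] by simp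
  show "soft_V A (\<lambda>s a. (Q1 s a + Q2 s a) / 2) s \<le> (soft_V A Q1 s + soft_V A Q2 s) / 2"
    by (rule soft_V_midpoint_le[where Q=Q1 and Q'=Q2 and s=s, OF integrable_exp_soft_Q[OF Q1]
          integrable_exp_soft_Q[OF Q2] int])
  show "renyi_half A (soft_policy A Q1 s) (soft_policy A Q2 s)
          = soft_V A Q1 s + soft_V A Q2 s - 2 * soft_V A (\<lambda>s a. (Q1 s a + Q2 s a) / 2) s"
    by (rule renyi_half_soft_policy[where Q=Q1 and Q'=Q2 and s=s, OF int])
qed

lemma integrable_div_fixpoint_integrand:
  assumes Q1: "bounded_borel_Q S A Q1" and Q2: "bounded_borel_Q S A Q2"
    and C: "is_div_fixpoint S A P \<gamma> Q1 Q2 C"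
  shows "integrable (P s a)
           (\<lambda>s'. renyi_half A (soft_policy A Q1 s') (soft_policy A Q2 s') + (SUP a'. C s' a'))"
proof -
  obtain BC where "\<And>s a. \<bar>C s a\<bar> \<le> BC"
    using C unfolding is_div_fixpoint_def by (metis bounded_range_case_prod_abs_le)
  then have BC: "\<bar>SUP a'. C s' a'\<bar> \<le> BC" for s'
    by (rule abs_SUP_le)
  obtain B1 where B1: "\<And>s. \<bar>soft_V A Q1 s\<bar> \<le> B1"
    using bounded_soft_V[OF Q1] by blast
  obtain B2 where B2: "\<And>s. \<bar>soft_V A Q2 s\<bar> \<le> B2"
    using bounded_soft_V[OF Q2] by blast
  obtain B where B: "\<And>s. \<bar>soft_V A (\<lambda>s a. (Q1 s a + Q2 s a) / 2) s\<bar> \<le> B"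
    using bounded_soft_V[OF bounded_borel_Q_midpoint[OF Q1 Q2]] by blast
  have "\<bar>renyi_half A (soft_policy A Q1 s') (soft_policy A Q2 s') + (SUP a'. C s' a')\<bar>
      \<le> B1 + B2 + 2 * B + BC" for s'
    using B1[of s'] B2[of s'] B[of s'] BC[of s']
    unfolding renyi_half_soft_policy_eq[OF Q1 Q2] abs_le_iff by (intro conjI; linarith)
  moreover have "(\<lambda>s'. renyi_half A (soft_policy A Q1 s') (soft_policy A Q2 s') + (SUP a'. C s' a'))
      \<in> borel_measurable S"
    using C unfolding is_div_fixpoint_def by blast
  ultimately show ?thesis
    by (intro integrable_P_bounded)
qed

lemma opt_soft_Q_midpoint_gap:
  assumes Q1: "is_opt_soft_Q S A P \<gamma> r1 Q1" and Q2: "is_opt_soft_Q S A P \<gamma> r2 Q2"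
    and QC: "is_opt_soft_Q S A P \<gamma> (\<lambda>s a. (r1 s a + r2 s a) / 2) QC"
  shows "QC s a - (Q1 s a + Q2 s a) / 2
           = \<gamma> * (\<integral>s'. soft_V A QC s' - (soft_V A Q1 s' + soft_V A Q2 s') / 2 \<partial>P s a)"
proof -
  note int = integrable_soft_V[OF is_opt_soft_Q_bounded_borel, of _ _ _ _ s a]
  have integral_eq: "(\<integral>s'. soft_V A QC s' - (soft_V A Q1 s' + soft_V A Q2 s') / 2 \<partial>P s a)
          = (\<integral>s'. soft_V A QC s' \<partial>P s a)
            - ((\<integral>s'. soft_V A Q1 s' \<partial>P s a) + (\<integral>s'. soft_V A Q2 s' \<partial>P s a)) / 2"
    using int[OF Q1] int[OF Q2] int[OF QC] by simp
  show ?thesis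
    using Q1 Q2 QC unfolding integral_eq is_opt_soft_Q_def soft_backup_def
    by (simp add: algebra_simps add_divide_distrib)
qed

lemma opt_soft_Q_avg_reward_le_midpoint:
  assumes Q1: "is_opt_soft_Q S A P \<gamma> r1 Q1" and Q2: "is_opt_soft_Q S A P \<gamma> r2 Q2"
    and QC: "is_opt_soft_Q S A P \<gamma> (\<lambda>s a. (r1 s a + r2 s a) / 2) QC"
  shows "QC s a \<le> (Q1 s a + Q2 s a) / 2"
proof -
  define Q where "Q = (\<lambda>s a. (Q1 s a + Q2 s a) / 2)"
  have Q1_bb: "bounded_borel_Q S A Q1" and Q2_bb: "bounded_borel_Q S A Q2"
    and QC_bb: "bounded_borel_Q S A QC" and Q_bb: "bounded_borel_Q S A Q"
    using Q1 Q2 QC by (simp_all add: is_opt_soft_Q_bounded_borel bounded_borel_Q_midpoint Q_def)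
  obtain MC M where MC: "\<And>s a. \<bar>QC s a\<bar> \<le> MC" and M: "\<And>s a. \<bar>Q s a\<bar> \<le> M"
    using QC_bb Q_bb unfolding bounded_borel_Q_def by (metis bounded_range_case_prod_abs_le)
  define f where "f = (\<lambda>(s, a). QC s a - Q s a)"
  have "f (s, a) \<le> 0"
  proof (rule nonpos_if_upper_bound_contracts[where f=f, OF _ discount_less_one])
    show "bdd_above (range f)"
    proof (rule bdd_aboveI2[where M="MC + M"])
      show "f p \<le> MC + M" for p
        using MC[of "fst p" "snd p"] M[of "fst p" "snd p"] by (simp add: f_def split_beta abs_le_iff)
    qed
    show "f x \<le> \<gamma> * K" if K: "\<And>y. f y \<le> K" for K x
    proof -
      obtain s a where x: "x = (s, a)"
        by fastforce
      have "soft_V A QC s' - (soft_V A Q1 s' + soft_V A Q2 s') / 2 \<le> K" for s'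
      proof -
        have "soft_V A QC s' \<le> soft_V A Q s' + K"
        proof (intro soft_V_le_add integrable_exp_soft_Q QC_bb Q_bb)
          show "QC s' a' \<le> Q s' a' + K" for a'
            using K[of "(s', a')"] by (simp add: f_def)
        qed
        then show ?thesis
          using soft_V_midpoint_le_mean[OF Q1_bb Q2_bb, of s'] unfolding Q_def by linarith
      qed
      then have "(\<integral>s'. soft_V A QC s' - (soft_V A Q1 s' + soft_V A Q2 s') / 2 \<partial>P s a) \<le> K"
        using integrable_soft_V[OF Q1_bb] integrable_soft_V[OF Q2_bb] integrable_soft_V[OF QC_bb]
        by (intro prob_space.integral_le_const[OF prob_space_P]) auto
      then show "f x \<le> \<gamma> * K"
        unfolding x f_def Q_def opt_soft_Q_midpoint_gap[OF Q1 Q2 QC]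
        using discount_nonneg by (simp add: mult_left_mono)
    qed
  qed
  then show ?thesis
    by (simp add: f_def Q_def)
qed

lemma opt_soft_Q_midpoint_minus_div_fixpoint_le:
  assumes Q1: "is_opt_soft_Q S A P \<gamma> r1 Q1" and Q2: "is_opt_soft_Q S A P \<gamma> r2 Q2"
    and QC: "is_opt_soft_Q S A P \<gamma> (\<lambda>s a. (r1 s a + r2 s a) / 2) QC"
    and C: "is_div_fixpoint S A P \<gamma> Q1 Q2 C"
  shows "(Q1 s a + Q2 s a) / 2 - C s a \<le> QC s a"
proof -
  define Q where "Q = (\<lambda>s a. (Q1 s a + Q2 s a) / 2)"
  have Q1_bb: "bounded_borel_Q S A Q1" and Q2_bb: "bounded_borel_Q S A Q2"
    and QC_bb: "bounded_borel_Q S A QC" and Q_bb: "bounded_borel_Q S A Q"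
    using Q1 Q2 QC by (simp_all add: is_opt_soft_Q_bounded_borel bounded_borel_Q_midpoint Q_def)
  define D where "D s' = renyi_half A (soft_policy A Q1 s') (soft_policy A Q2 s')" for s'
  define c where "c s' = (SUP a'. C s' a')" for s'
  have C_eq: "C s a = \<gamma> * (\<integral>s'. D s' + c s' \<partial>P s a)" for s a
    using C unfolding is_div_fixpoint_def D_def c_def by blast
  have int_Dc: "integrable (P s a) (\<lambda>s'. D s' + c s')" for s a
    unfolding D_def c_def using Q1_bb Q2_bb C by (rule integrable_div_fixpoint_integrand)
  have mean_minus_D_le: "(soft_V A Q1 s' + soft_V A Q2 s') / 2 - D s' \<le> soft_V A Q s'" for s'
  proof -
    have "D s' = soft_V A Q1 s' + soft_V A Q2 s' - 2 * soft_V A Q s'"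
      unfolding D_def Q_def by (rule renyi_half_soft_policy_eq[OF Q1_bb Q2_bb])
    moreover have "soft_V A Q s' \<le> (soft_V A Q1 s' + soft_V A Q2 s') / 2"
      unfolding Q_def by (rule soft_V_midpoint_le_mean[OF Q1_bb Q2_bb])
    ultimately show ?thesis
      by (simp add: field_simps)
  qed
  obtain BC where BC: "\<And>s a. \<bar>C s a\<bar> \<le> BC"
    using C unfolding is_div_fixpoint_def by (metis bounded_range_case_prod_abs_le)
  have C_le_c: "C s' a' \<le> c s'" for s' a'
    unfolding c_def using BC by (intro cSUP_upper bdd_aboveI2[where M=BC]) (auto simp: abs_le_iff)
  obtain MC M where MC: "\<And>s a. \<bar>QC s a\<bar> \<le> MC" and M: "\<And>s a. \<bar>Q s a\<bar> \<le> M"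
    using QC_bb Q_bb unfolding bounded_borel_Q_def by (metis bounded_range_case_prod_abs_le)
  define f where "f = (\<lambda>(s, a). Q s a - QC s a - C s a)"
  have "f (s, a) \<le> 0"
  proof (rule nonpos_if_upper_bound_contracts[where f=f, OF _ discount_less_one])
    show "bdd_above (range f)"
    proof (rule bdd_aboveI2[where M="M + MC + BC"])
      show "f p \<le> M + MC + BC" for p
        using MC[of "fst p" "snd p"] M[of "fst p" "snd p"] BC[of "fst p" "snd p"]
        by (simp add: f_def split_beta abs_le_iff)
    qed
    show "f x \<le> \<gamma> * K" if K: "\<And>y. f y \<le> K" for K x
    proof -
      obtain s a where x: "x = (s, a)"
        by fastforce
      define g where "g s' = soft_V A QC s' - (soft_V A Q1 s' + soft_V A Q2 s') / 2" for s'
      have int_g: "integrable (P s a) g"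
        using integrable_soft_V[OF Q1_bb] integrable_soft_V[OF Q2_bb] integrable_soft_V[OF QC_bb]
        by (simp add: g_def[abs_def])
      have "- g s' - (D s' + c s') \<le> K" for s'
      proof -
        have "soft_V A Q s' \<le> soft_V A QC s' + (c s' + K)"
        proof (intro soft_V_le_add integrable_exp_soft_Q Q_bb QC_bb)
          show "Q s' a' \<le> QC s' a' + (c s' + K)" for a'
            using K[of "(s', a')"] C_le_c[of s' a'] by (simp add: f_def)
        qed
        then show ?thesis
          using mean_minus_D_le[of s'] by (simp add: g_def)
      qed
      then have "(\<integral>s'. - g s' - (D s' + c s') \<partial>P s a) \<le> K"
        using int_g int_Dc by (intro prob_space.integral_le_const[OF prob_space_P]) auto
      also have "(\<integral>s'. - g s' - (D s' + c s') \<partial>P s a) = - (\<integral>s'. g s' \<partial>P s a) - (\<integral>s'. D s' + c s' \<partial>P s a)"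
        using int_g int_Dc by simp
      finally have "\<gamma> * (- (\<integral>s'. g s' \<partial>P s a) - (\<integral>s'. D s' + c s' \<partial>P s a)) \<le> \<gamma> * K"
        using discount_nonneg by (rule mult_left_mono)
      then show "f x \<le> \<gamma> * K"
        using opt_soft_Q_midpoint_gap[OF Q1 Q2 QC, of s a] C_eq[of s a]
        by (simp add: x f_def Q_def g_def algebra_simps)
    qed
  qed
  then show ?thesis
    by (simp add: f_def Q_def)
qed

end

theorem lemma1:
  fixes S :: "'s measure" and A :: "'a measure"
    and P :: "'s \<Rightarrow> 'a \<Rightarrow> 's measure" and \<gamma> :: real
    and r1 r2 Q1 Q2 QC C :: "'s \<Rightarrow> 'a \<Rightarrow> real"
  assumes space_S: "space S = UNIV"
    and space_A: "space A = UNIV"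
    and A_finite: "finite_measure A"
    and A_pos: "emeasure A (space A) > 0"
    and P_prob: "\<And>s a. prob_space (P s a)"
    and P_sets: "\<And>s a. sets (P s a) = sets S"
    and gamma: "0 < \<gamma>" "\<gamma> < 1"
    and r1_bdd: "bounded (range (case_prod r1))"
    and r2_bdd: "bounded (range (case_prod r2))"
    and Q1: "is_opt_soft_Q S A P \<gamma> r1 Q1"
    and Q2: "is_opt_soft_Q S A P \<gamma> r2 Q2"
    and QC: "is_opt_soft_Q S A P \<gamma> (\<lambda>s a. (r1 s a + r2 s a) / 2) QC"
    and C: "is_div_fixpoint S A P \<gamma> Q1 Q2 C"
  shows "\<forall>s a. (Q1 s a + Q2 s a) / 2 \<ge> QC s a \<and>
               QC s a \<ge> (Q1 s a + Q2 s a) / 2 - C s a"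
proof -
  interpret soft_mdp S A P \<gamma>
    using A_finite A_pos space_S P_prob P_sets gamma
    by (simp add: soft_mdp_def soft_mdp_axioms_def soft_action_space_def soft_action_space_axioms_def)
  show ?thesis
    using opt_soft_Q_avg_reward_le_midpoint[OF Q1 Q2 QC]
      opt_soft_Q_midpoint_minus_div_fixpoint_le[OF Q1 Q2 QC C]
    by auto
qed

end
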